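(* Let $p>1$. Then for all $0\le\eta\le1$, $$\psi\!\left(-\frac1p,\eta^{p/(p-1)}\right)=\psi\!\left(\frac1{p-1},\eta\right),$$ where for $\beta>-1$, $\beta\neq0$, and $0\le\eta\le1$, $$\psi(\beta,\eta)=\begin{cases}\dfrac{(1+\eta^{\beta+1})^{1/\beta}}{(1+\eta)^{(\beta+1)/\beta}}+\dfrac{(\beta+1)^{(\beta+1)/\beta}}{\beta}\left[\dfrac1{1+\eta^{\beta+1}}-\dfrac1{1+\eta}\right], & 0\le\eta\le\eta_1(\beta),\\[2ex] 2\dfrac{(1+\eta^{\beta+1})^{1/\beta}}{(1+\eta)^{(\beta+1)/\beta}}, & \eta_1(\beta)\le\eta\le1,\end{cases}$$ and $\eta_1(\beta)\in(0,1)$ is the root of the equation $\eta^\beta=\dfrac{1}{1+\beta(\eta+1)}$. *)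

theory Defs
  imports Complex_Main
begin

definition eta1 :: "real \<Rightarrow> real" where
  "eta1 \<beta> = (THE \<eta>. 0 < \<eta> \<and> \<eta> < 1 \<and> \<eta> powr \<beta> = 1 / (1 + \<beta> * (\<eta> + 1)))"

definition psi :: "real \<Rightarrow> real \<Rightarrow> real" where
  "psi \<beta> \<eta> =
     (if \<eta> \<le> eta1 \<beta> then
        (1 + \<eta> powr (\<beta> + 1)) powr (1 / \<beta>) / (1 + \<eta>) powr ((\<beta> + 1) / \<beta>)
        + ((\<beta> + 1) powr ((\<beta> + 1) / \<beta>) / \<beta>)
          * (1 / (1 + \<eta> powr (\<beta> + 1)) - 1 / (1 + \<eta>))
      else
        2 * ((1 + \<eta> powr (\<beta> + 1)) powr (1 / \<beta>) / (1 + \<eta>) powr ((\<beta> + 1) / \<beta>)))"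

end

theory Submission
  imports Defs
begin

text \<open>Put \<open>\<gamma> = 1/(p-1) > 0\<close>, so \<open>\<beta> = -1/p = -\<gamma>/(\<gamma>+1)\<close>, \<open>\<beta>+1 = 1/(\<gamma>+1)\<close> and
  \<open>p/(p-1) = \<gamma>+1\<close>. With \<open>x = \<eta> powr (\<gamma>+1)\<close> we get \<open>x powr (\<beta>+1) = \<eta>\<close>, so the two
  arguments \<open>\<eta>\<close> and \<open>\<eta> powr (\<gamma>+1)\<close> swap roles: the first summands of both sides agree,
  while the coefficient \<open>(\<beta>+1) powr ((\<beta>+1)/\<beta>) / \<beta>\<close> and the bracket both change sign.
  The thresholds correspond too: the equation defining \<open>eta1 \<gamma>\<close> at \<open>x\<close> and the one
  defining \<open>eta1 \<beta>\<close> at \<open>x powr (\<gamma>+1)\<close> both reduce to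
  \<open>(\<gamma>+1) x powr \<gamma> + \<gamma> x powr (\<gamma>+1) = 1\<close>, whose left side increases strictly from
  \<open>0\<close> to \<open>2\<gamma>+1\<close> on \<open>[0,1]\<close>. Hence \<open>eta1 \<beta> = eta1 \<gamma> powr (\<gamma>+1)\<close>.\<close>

lemma root_equation_iff:
  fixes \<gamma> x :: real
  assumes "\<gamma> > 0" and "x > 0"
  shows "x powr \<gamma> = 1 / (1 + \<gamma> * (x + 1)) \<longleftrightarrow> (\<gamma> + 1) * x powr \<gamma> + \<gamma> * x powr (\<gamma> + 1) = 1"
proof -
  have "1 + \<gamma> * (x + 1) > 0" using assms by (simp add: add_pos_nonneg)
  then have "x powr \<gamma> = 1 / (1 + \<gamma> * (x + 1)) \<longleftrightarrow> x powr \<gamma> * (1 + \<gamma> * (x + 1)) = 1"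
    by (simp add: eq_divide_eq)
  also have "x powr \<gamma> * (1 + \<gamma> * (x + 1)) = (\<gamma> + 1) * x powr \<gamma> + \<gamma> * x powr (\<gamma> + 1)"
    using assms by (simp add: powr_add algebra_simps)
  finally show ?thesis .
qed

lemma dual_root_equation_iff:
  fixes \<gamma> x :: real
  assumes "\<gamma> > 0" and "x > 0"
  shows "(x powr (\<gamma> + 1)) powr (- \<gamma> / (\<gamma> + 1))
           = 1 / (1 + (- \<gamma> / (\<gamma> + 1)) * (x powr (\<gamma> + 1) + 1))
         \<longleftrightarrow> (\<gamma> + 1) * x powr \<gamma> + \<gamma> * x powr (\<gamma> + 1) = 1"
proof -
  have "(\<gamma> + 1) * (- \<gamma> / (\<gamma> + 1)) = - \<gamma>" using assms by simp
  then have lhs: "(x powr (\<gamma> + 1)) powr (- \<gamma> / (\<gamma> + 1)) = 1 / x powr \<gamma>"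
    by (simp only: powr_powr powr_minus) (simp add: divide_inverse)
  have rhs: "1 + (- \<gamma> / (\<gamma> + 1)) * (x powr (\<gamma> + 1) + 1) = (1 - \<gamma> * x powr (\<gamma> + 1)) / (\<gamma> + 1)"
    using assms by (simp add: field_simps)
  have "(\<gamma> + 1) * x powr \<gamma> > 0" using assms by simp
  then show ?thesis
    unfolding lhs rhs using assms
    by (cases "1 - \<gamma> * x powr (\<gamma> + 1) = 0") (auto simp: field_simps)
qed

lemma ex1_root_equation:
  fixes \<gamma> :: real
  assumes "\<gamma> > 0"
  shows "\<exists>!x. 0 < x \<and> x < 1 \<and> x powr \<gamma> = 1 / (1 + \<gamma> * (x + 1))"
proof -
  define f where "f x = (\<gamma> + 1) * x powr \<gamma> + \<gamma> * x powr (\<gamma> + 1)" for x :: real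
  have f_less: "f a < f b" if "0 \<le> a" "a < b" for a b
  proof -
    have "a powr \<gamma> < b powr \<gamma>" "a powr (\<gamma> + 1) < b powr (\<gamma> + 1)"
      using that assms by (simp_all add: powr_less_mono2)
    then show ?thesis using assms unfolding f_def by (intro add_strict_mono) simp_all
  qed
  have "continuous_on {0..1} f"
    unfolding f_def using assms by (intro continuous_intros continuous_on_powr') auto
  moreover have "f 0 \<le> 1" "1 \<le> f 1" using assms by (simp_all add: f_def)
  ultimately obtain x where x: "0 \<le> x" "x \<le> 1" "f x = 1"
    using IVT'[of f 0 1 1] by auto
  have "x \<noteq> 0" "x \<noteq> 1" using x assms by (auto simp: f_def)
  with x have "0 < x" "x < 1" by auto
  have root_iff: "y powr \<gamma> = 1 / (1 + \<gamma> * (y + 1)) \<longleftrightarrow> f y = 1" if "0 < y" for y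
    using root_equation_iff[OF assms that] by (simp add: f_def)
  show ?thesis
  proof (rule ex1I[of _ x])
    show "0 < x \<and> x < 1 \<and> x powr \<gamma> = 1 / (1 + \<gamma> * (x + 1))"
      using \<open>0 < x\<close> \<open>x < 1\<close> root_iff x(3) by blast
  next
    fix y assume "0 < y \<and> y < 1 \<and> y powr \<gamma> = 1 / (1 + \<gamma> * (y + 1))"
    then have "0 < y" "f y = 1" using root_iff by auto
    then show "y = x"
      using f_less[of x y] f_less[of y x] \<open>0 < x\<close> x(3) by (cases y x rule: linorder_cases) auto
  qed
qed

lemma eta1_root:
  fixes \<gamma> :: real
  assumes "\<gamma> > 0"
  shows "0 < eta1 \<gamma>" "eta1 \<gamma> < 1" "eta1 \<gamma> powr \<gamma> = 1 / (1 + \<gamma> * (eta1 \<gamma> + 1))"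
  using theI'[OF ex1_root_equation[OF assms]] unfolding eta1_def by auto

lemma eta1_dual:
  fixes \<gamma> :: real
  assumes "\<gamma> > 0"
  shows "eta1 (- \<gamma> / (\<gamma> + 1)) = eta1 \<gamma> powr (\<gamma> + 1)"
  unfolding eta1_def[of "- \<gamma> / (\<gamma> + 1)"]
proof (rule the_equality)
  let ?r = "eta1 \<gamma>"
  have "?r powr (\<gamma> + 1) < 1 powr (\<gamma> + 1)"
    using eta1_root[OF assms] assms by (intro powr_less_mono2) auto
  then show "0 < ?r powr (\<gamma> + 1) \<and> ?r powr (\<gamma> + 1) < 1 \<and>
      (?r powr (\<gamma> + 1)) powr (- \<gamma> / (\<gamma> + 1))
        = 1 / (1 + - \<gamma> / (\<gamma> + 1) * (?r powr (\<gamma> + 1) + 1))"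
    using eta1_root[OF assms] root_equation_iff[OF assms] dual_root_equation_iff[OF assms] by simp
next
  fix y assume y: "0 < y \<and> y < 1 \<and> y powr (- \<gamma> / (\<gamma> + 1)) = 1 / (1 + - \<gamma> / (\<gamma> + 1) * (y + 1))"
  define x where "x = y powr (1 / (\<gamma> + 1))"
  have y_eq: "y = x powr (\<gamma> + 1)"
    using y assms by (simp add: x_def powr_powr)
  have "0 < x" using y by (simp add: x_def)
  have "x < 1 powr (1 / (\<gamma> + 1))"
    unfolding x_def using y assms by (intro powr_less_mono2) auto
  moreover have "x powr \<gamma> = 1 / (1 + \<gamma> * (x + 1))"
    using y dual_root_equation_iff[OF assms \<open>0 < x\<close>] root_equation_iff[OF assms \<open>0 < x\<close>]
    unfolding y_eq by simp
  ultimately have "x = eta1 \<gamma>"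
    using ex1_root_equation[OF assms] eta1_root[OF assms] \<open>0 < x\<close> by auto
  then show "y = eta1 \<gamma> powr (\<gamma> + 1)" using y_eq by simp
qed

lemma psi_dual:
  fixes \<gamma> \<eta> :: real
  assumes "\<gamma> > 0" and "0 \<le> \<eta>"
  shows "psi (- \<gamma> / (\<gamma> + 1)) (\<eta> powr (\<gamma> + 1)) = psi \<gamma> \<eta>"
proof -
  define \<beta> where "\<beta> = - \<gamma> / (\<gamma> + 1)"
  define x where "x = \<eta> powr (\<gamma> + 1)"
  have \<beta>_succ: "\<beta> + 1 = 1 / (\<gamma> + 1)"
    and \<beta>_exps: "1 / \<beta> = - ((\<gamma> + 1) / \<gamma>)" "(\<beta> + 1) / \<beta> = - (1 / \<gamma>)"
    using assms by (simp_all add: \<beta>_def field_simps)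
  have x_powr: "x powr (\<beta> + 1) = \<eta>"
    using assms by (simp add: x_def \<beta>_succ powr_powr)
  have x_nonneg: "0 \<le> x" by (simp add: x_def)
  have first_summand: "(1 + x powr (\<beta> + 1)) powr (1 / \<beta>) / (1 + x) powr ((\<beta> + 1) / \<beta>)
      = (1 + \<eta> powr (\<gamma> + 1)) powr (1 / \<gamma>) / (1 + \<eta>) powr ((\<gamma> + 1) / \<gamma>)"
    unfolding x_powr \<beta>_exps using assms x_nonneg
    by (simp add: powr_minus x_def divide_inverse)
  have coefficient: "(\<beta> + 1) powr ((\<beta> + 1) / \<beta>) / \<beta> = - ((\<gamma> + 1) powr ((\<gamma> + 1) / \<gamma>) / \<gamma>)"
  proof -
    have "(\<beta> + 1) powr ((\<beta> + 1) / \<beta>) = (\<gamma> + 1) powr (1 / \<gamma>)"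
      unfolding \<beta>_exps(2) unfolding \<beta>_succ using assms
      by (simp only: powr_minus powr_divide) simp
    moreover have "(\<gamma> + 1) powr ((\<gamma> + 1) / \<gamma>) = (\<gamma> + 1) powr (1 / \<gamma>) * (\<gamma> + 1)"
      using assms by (simp add: add_divide_distrib powr_add)
    ultimately show ?thesis using assms by (simp add: \<beta>_def field_simps)
  qed
  have threshold: "x \<le> eta1 \<beta> \<longleftrightarrow> \<eta> \<le> eta1 \<gamma>"
  proof -
    have "0 < eta1 \<gamma>" using eta1_root[OF assms(1)] by simp
    then show ?thesis
      unfolding x_def \<beta>_def eta1_dual[OF assms(1)] using assms
      by (metis add_pos_pos linorder_not_le powr_less_mono2 powr_mono2 less_imp_le zero_less_one)
  qed
  show ?thesis
    unfolding \<beta>_def[symmetric] x_def[symmetric] psi_def threshold first_summand coefficient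
    unfolding x_powr by (simp add: x_def algebra_simps)
qed

theorem corollary2p2:
  fixes p \<eta> :: real
  assumes "p > 1" and "0 \<le> \<eta>" and "\<eta> \<le> 1"
  shows "psi (- 1 / p) (\<eta> powr (p / (p - 1))) = psi (1 / (p - 1)) \<eta>"
proof -
  define \<gamma> where "\<gamma> = 1 / (p - 1)"
  have "\<gamma> > 0" and "- \<gamma> / (\<gamma> + 1) = - 1 / p" and "\<gamma> + 1 = p / (p - 1)"
    using assms(1) by (simp_all add: \<gamma>_def field_simps)
  with psi_dual[of \<gamma> \<eta>] assms(2) show ?thesis by (simp add: \<gamma>_def)
qed

end
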